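(* Let $G$ be the Halin graph built from the tree $T$ consisting of a centre $v_0$ adjacent to four vertices $v_1,v_2,v_3,v_4$, each $v_i$ having exactly two further neighbours (leaves) $v_{i1},v_{i2}$, with the eight leaves joined by the cycle $v_{11}v_{12}v_{21}v_{22}v_{31}v_{32}v_{41}v_{42}v_{11}$. For each edge $vw$ let $L(vw)=\{1,2,\ldots,\max(\deg(v),\deg(w))\}$ (so the four edges at $v_0$ get $\{1,2,3,4\}$ and all other edges get $\{1,2,3\}$). Then $G$ has no $L$-edge-colouring. Consequently the constant $4$ in the hypothesis $|L(vw)|\ge\max(\deg(v),\deg(w),4)$ of the list-colouring lemma for Halin graphs cannot be removed.
   Context: An $L$-edge-colouring is a map $\mathcal{C}$ on $E(G)$ with $\mathcal{C}(e)\in L(e)$ for every edge $e$ and with edges sharing an endpoint receiving different colours. A Halin graph is obtained by taking a planar embedding of a tree with no vertices of degree $2$ and adding a cycle through all its leaves in the cyclic order of the embedding. *)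

theory Defs
  imports Main
begin

text \<open>Vertices of the tree T: the centre v0, the four middle vertices v1..v4
  (Mid i), and the leaves v_ij (Leaf i j), i in 1..4, j in 1..2.\<close>
datatype vtx = Centre | Mid nat | Leaf nat nat

definition tree_edges :: "vtx set set" where
  "tree_edges =
     {{Centre, Mid i} | i. i \<in> {1..4}} \<union>
     {{Mid i, Leaf i j} | i j. i \<in> {1..4} \<and> j \<in> {1,2}}"

definition leaf_cycle :: "vtx list" where
  "leaf_cycle = [Leaf 1 1, Leaf 1 2, Leaf 2 1, Leaf 2 2,
                 Leaf 3 1, Leaf 3 2, Leaf 4 1, Leaf 4 2]"

definition cycle_edges :: "vtx set set" where
  "cycle_edges = {{leaf_cycle ! k, leaf_cycle ! ((k + 1) mod 8)} | k. k < 8}"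

definition halin_G :: "vtx set set" where
  "halin_G = tree_edges \<union> cycle_edges"

definition degree :: "'v set set \<Rightarrow> 'v \<Rightarrow> nat" where
  "degree E v = card {e \<in> E. v \<in> e}"

definition L_lists :: "vtx set \<Rightarrow> nat set" where
  "L_lists e = {1 .. Max (degree halin_G ` e)}"

definition is_L_edge_colouring ::
  "'v set set \<Rightarrow> ('v set \<Rightarrow> 'c set) \<Rightarrow> ('v set \<Rightarrow> 'c) \<Rightarrow> bool" where
  "is_L_edge_colouring E L C \<longleftrightarrow>
     (\<forall>e\<in>E. C e \<in> L e) \<and>
     (\<forall>e\<in>E. \<forall>f\<in>E. e \<noteq> f \<and> e \<inter> f \<noteq> {} \<longrightarrow> C e \<noteq> C f)"

end

theory Submission imports Defs begin

text \<open>The four edges at the centre carry all of the colours 1, 2, 3, 4. Let \<open>w\<close> be the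
  middle vertex whose edge to the centre has colour 4, and let \<open>a \<in> {1,2,3}\<close> be the colour of
  another edge at \<open>w\<close>. Every vertex other than the centre and \<open>w\<close> has three edges coloured
  from \<open>{1,2,3}\<close>, so it sees every one of these colours. Hence colour \<open>a\<close> occurs at all
  13 vertices, i.e. its colour class is a perfect matching of a graph of odd order.\<close>

lemma colour_class_pairwise_disjnt:
  assumes "is_L_edge_colouring E L C"
  shows "pairwise disjnt {e \<in> E. C e = a}"
  using assms unfolding is_L_edge_colouring_def pairwise_def disjnt_def by blast

lemma even_card_Union_colour_class:
  assumes "finite E" and "\<forall>e\<in>E. card e = 2" and "is_L_edge_colouring E L C"
  shows "even (card (\<Union>{e \<in> E. C e = a}))"
proof -
  have "card (\<Union>{e \<in> E. C e = a}) = (\<Sum>e \<in> {e \<in> E. C e = a}. card e)"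
    using assms by (intro card_Union_disjoint colour_class_pairwise_disjnt) (auto intro: card_ge_0_finite)
  also have "\<dots> = 2 * card {e \<in> E. C e = a}"
    using assms(2) by simp
  finally show ?thesis by simp
qed

lemma colouring_inj_on_edges_at:
  assumes "is_L_edge_colouring E L C"
  shows "inj_on C {e \<in> E. v \<in> e}"
  using assms unfolding is_L_edge_colouring_def inj_on_def by blast

lemma colour_occurs_at_vertex:
  assumes "is_L_edge_colouring E L C" and "finite K"
    and "\<forall>e\<in>E. v \<in> e \<longrightarrow> C e \<in> K" and "card K \<le> degree E v" and "a \<in> K"
  shows "\<exists>e\<in>E. v \<in> e \<and> C e = a"
proof -
  have sub: "C ` {e \<in> E. v \<in> e} \<subseteq> K"
    using assms(3) by blast
  have "card (C ` {e \<in> E. v \<in> e}) = degree E v"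
    unfolding degree_def by (rule card_image[OF colouring_inj_on_edges_at[OF assms(1)]])
  then have "C ` {e \<in> E. v \<in> e} = K"
    using card_subset_eq[OF assms(2) sub] card_mono[OF assms(2) sub] assms(4) by simp
  then show ?thesis
    using assms(5) by blast
qed

definition halin_edge_list :: "vtx set list" where
  "halin_edge_list =
    [{Centre, Mid 1}, {Centre, Mid 2}, {Centre, Mid 3}, {Centre, Mid 4},
     {Mid 1, Leaf 1 1}, {Mid 1, Leaf 1 2}, {Mid 2, Leaf 2 1}, {Mid 2, Leaf 2 2},
     {Mid 3, Leaf 3 1}, {Mid 3, Leaf 3 2}, {Mid 4, Leaf 4 1}, {Mid 4, Leaf 4 2},
     {Leaf 1 1, Leaf 1 2}, {Leaf 1 2, Leaf 2 1}, {Leaf 2 1, Leaf 2 2}, {Leaf 2 2, Leaf 3 1},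
     {Leaf 3 1, Leaf 3 2}, {Leaf 3 2, Leaf 4 1}, {Leaf 4 1, Leaf 4 2}, {Leaf 4 2, Leaf 1 1}]"

lemma atLeastAtMost_1_4_nat: "{1..4::nat} = {1, 2, 3, 4}"
  by (auto simp: numeral_eq_Suc)

lemma tree_edges_eq: "tree_edges = set (take 12 halin_edge_list)"
proof -
  have centre_edges: "{{Centre, Mid i} | i. i \<in> {1..4}} = (\<lambda>i. {Centre, Mid i}) ` {1, 2, 3, 4}"
    unfolding atLeastAtMost_1_4_nat by blast
  have leaf_edges: "{{Mid i, Leaf i j} | i j. i \<in> {1..4} \<and> j \<in> {1, 2}}
      = (\<lambda>(i, j). {Mid i, Leaf i j}) ` ({1, 2, 3, 4} \<times> {1, 2})"
    unfolding atLeastAtMost_1_4_nat by (auto simp del: insert_iff; auto)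
  show ?thesis
    unfolding tree_edges_def centre_edges leaf_edges halin_edge_list_def by auto
qed

lemma cycle_edges_eq: "cycle_edges = set (drop 12 halin_edge_list)"
proof -
  have "cycle_edges = (\<lambda>k. {leaf_cycle ! k, leaf_cycle ! ((k + 1) mod 8)}) ` set [0..<8]"
    unfolding cycle_edges_def by auto
  then show ?thesis by (simp add: halin_edge_list_def leaf_cycle_def upt_rec insert_commute)
qed

lemma halin_G_eq: "halin_G = set halin_edge_list"
  unfolding halin_G_def tree_edges_eq cycle_edges_eq set_append[symmetric] append_take_drop_id ..

lemma finite_halin_G: "finite halin_G"
  by (simp add: halin_G_eq)

lemma card_halin_G_edge: "\<forall>e\<in>halin_G. card e = 2"
  by (simp add: halin_G_eq halin_edge_list_def)

lemma Union_halin_G: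
  "\<Union>halin_G = {Centre, Mid 1, Mid 2, Mid 3, Mid 4, Leaf 1 1, Leaf 1 2, Leaf 2 1, Leaf 2 2,
                 Leaf 3 1, Leaf 3 2, Leaf 4 1, Leaf 4 2}"
  by (auto simp: halin_G_eq halin_edge_list_def)

lemma card_Union_halin_G: "card (\<Union>halin_G) = 13"
  by (simp add: Union_halin_G)

lemma degree_halin_G:
  assumes "v \<in> \<Union>halin_G"
  shows "degree halin_G v = (if v = Centre then 4 else 3)"
  using assms unfolding Union_halin_G degree_def halin_G_eq set_filter[symmetric] card_set
  by (auto simp: halin_edge_list_def doubleton_eq_iff)

lemma L_lists_halin_G:
  assumes "e \<in> halin_G"
  shows "L_lists e = (if Centre \<in> e then {1..4} else {1..3})"
proof -
  have "degree halin_G ` e = (\<lambda>v. if v = Centre then 4 else 3) ` e"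
    using assms by (intro image_cong refl) (metis UnionI degree_halin_G)
  moreover obtain x y where "e = {x, y}" "x \<noteq> y"
    using assms card_halin_G_edge by (meson card_2_iff)
  ultimately show ?thesis
    by (auto simp: L_lists_def)
qed

lemma edge_at_Centre_eq:
  assumes "e \<in> halin_G" and "Centre \<in> e" and "v \<in> e" and "v \<noteq> Centre"
  shows "e = {Centre, v}"
  using assms card_halin_G_edge by (force simp: card_2_iff)

lemma halin_colouring_centre_edge_colour:
  assumes "is_L_edge_colouring halin_G L_lists C" and "e \<in> halin_G" and "Centre \<in> e"
  shows "C e \<in> {1..4}"
  using assms L_lists_halin_G[OF assms(2)] unfolding is_L_edge_colouring_def by force

lemma halin_colouring_other_edge_colour:
  assumes "is_L_edge_colouring halin_G L_lists C" and "e \<in> halin_G" and "Centre \<notin> e"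
  shows "C e \<in> {1..3}"
  using assms L_lists_halin_G[OF assms(2)] unfolding is_L_edge_colouring_def by force

lemma halin_colouring_centre_edge_4:
  assumes col: "is_L_edge_colouring halin_G L_lists C"
  obtains w where "{Centre, w} \<in> halin_G" "w \<noteq> Centre" "C {Centre, w} = 4"
proof -
  have "\<exists>e\<in>halin_G. Centre \<in> e \<and> C e = 4"
    using halin_colouring_centre_edge_colour[OF col]
    by (intro colour_occurs_at_vertex[OF col, of "{1..4}"]) (auto simp: degree_halin_G Union_halin_G)
  then obtain e where e: "e \<in> halin_G" "Centre \<in> e" "C e = 4"
    by blast
  moreover obtain w where "w \<in> e" "w \<noteq> Centre"
    using e card_halin_G_edge by (metis card_2_iff insertCI)
  ultimately show ?thesis
    using that edge_at_Centre_eq by metis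
qed

lemma halin_colouring_colour_at_vertex:
  assumes col: "is_L_edge_colouring halin_G L_lists C"
    and w: "{Centre, w} \<in> halin_G" "C {Centre, w} = 4"
    and v: "v \<in> \<Union>halin_G" "v \<noteq> Centre" "v \<noteq> w" and "a \<in> {1..3}"
  shows "\<exists>e\<in>halin_G. v \<in> e \<and> C e = a"
proof (rule colour_occurs_at_vertex[OF col, of "{1..3}"])
  show "\<forall>g\<in>halin_G. v \<in> g \<longrightarrow> C g \<in> {1..3}"
  proof (intro ballI impI)
    fix g assume g: "g \<in> halin_G" "v \<in> g"
    show "C g \<in> {1..3}"
    proof (cases "Centre \<in> g")
      case True
      then have "g \<noteq> {Centre, w}"
        using edge_at_Centre_eq[OF g(1) True g(2) v(2)] v(3) by (auto simp: doubleton_eq_iff)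
      moreover have "g \<inter> {Centre, w} \<noteq> {}"
        using True by blast
      ultimately have "C g \<noteq> 4"
        using col g(1) w unfolding is_L_edge_colouring_def by metis
      then show ?thesis
        using halin_colouring_centre_edge_colour[OF col g(1) True] by auto
    qed (use halin_colouring_other_edge_colour[OF col g(1)] in simp)
  qed
qed (use v assms(7) in \<open>auto simp: degree_halin_G\<close>)

lemma halin_colouring_colour_everywhere:
  assumes col: "is_L_edge_colouring halin_G L_lists C"
  shows "\<exists>a. \<forall>v\<in>\<Union>halin_G. \<exists>e\<in>halin_G. v \<in> e \<and> C e = a"
proof -
  obtain w where w: "{Centre, w} \<in> halin_G" "w \<noteq> Centre" "C {Centre, w} = 4"
    using halin_colouring_centre_edge_4[OF col] .
  then have "degree halin_G w = 3"
    using degree_halin_G[of w] by auto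
  then have "\<not> {g \<in> halin_G. w \<in> g} \<subseteq> {{Centre, w}}"
    using card_mono[of "{{Centre, w}}" "{g \<in> halin_G. w \<in> g}"] by (auto simp: degree_def)
  then obtain f where f: "f \<in> halin_G" "w \<in> f" "f \<noteq> {Centre, w}"
    by blast
  then have a: "C f \<in> {1..3}"
    using halin_colouring_other_edge_colour[OF col f(1)] edge_at_Centre_eq[OF f(1) _ f(2) w(2)]
    by blast
  have "\<exists>e\<in>halin_G. v \<in> e \<and> C e = C f" if v: "v \<in> \<Union>halin_G" for v
  proof -
    consider "v = Centre" | "v = w" | "v \<noteq> Centre" "v \<noteq> w" by blast
    then show ?thesis
    proof cases
      case 1
      then show ?thesis
        using halin_colouring_centre_edge_colour[OF col] a
        by (intro colour_occurs_at_vertex[OF col, of "{1..4}"]) (auto simp: degree_halin_G Union_halin_G)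
    qed (use f halin_colouring_colour_at_vertex[OF col w(1,3) v _ _ a] in blast)+
  qed
  then show ?thesis by blast
qed

theorem mainTheorem11:
  shows "\<not> (\<exists>C :: vtx set \<Rightarrow> nat. is_L_edge_colouring halin_G L_lists C)"
proof
  assume "\<exists>C :: vtx set \<Rightarrow> nat. is_L_edge_colouring halin_G L_lists C"
  then obtain C :: "vtx set \<Rightarrow> nat" where col: "is_L_edge_colouring halin_G L_lists C"
    by blast
  then obtain a where "\<forall>v\<in>\<Union>halin_G. \<exists>e\<in>halin_G. v \<in> e \<and> C e = a"
    using halin_colouring_colour_everywhere by blast
  then have "\<Union>{e \<in> halin_G. C e = a} = \<Union>halin_G"
    by blast
  moreover have "even (card (\<Union>{e \<in> halin_G. C e = a}))"
    using even_card_Union_colour_class[OF finite_halin_G card_halin_G_edge col] .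
  ultimately show False
    by (simp add: card_Union_halin_G)
qed

end
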